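(* Let $\alpha\ge\tfrac12$ and $1\le p<\infty$. There is a constant $C>0$ depending only on $\alpha$ and $p$ such that for every measurable $f$ on $\mathbb{R}_+$, $\sup_{y\in\mathbb{R}_+}\Big(\int_{\mathbb{R}_+}|f|^p\,\tau_y\mathbf{1}_{[0,1]}\,d\omega_\alpha\Big)^{1/p}\le C\,\|f\|_{p,\infty}.$
   Context: Fix $\alpha\geq\tfrac12$. The Bessel–Kingman hypergroup is $(\mathbb{R}_+,*_\alpha)$ with Haar measure $\omega_\alpha(dz)=z^{2\alpha+1}dz$ and, for $x,y>0$, $\varepsilon_x*_\alpha\varepsilon_y(f)=\int_{|x-y|}^{x+y}K_\alpha(x,y,z)f(z)z^{2\alpha+1}dz$ with $K_\alpha(x,y,z)=C_\Gamma\frac{[(z^2-(x-y)^2)((x+y)^2-z^2)]^{\alpha-1/2}}{(xyz)^{2\alpha}}$, $C_\Gamma=\frac{\Gamma(\alpha+1)}{\Gamma(1/2)\Gamma(\alpha+1/2)2^{2\alpha-1}}$; $\varepsilon_0$ is the identity. The translation is $\tau_yf(x)=\varepsilon_x*_\alpha\varepsilon_y(f)$ (so $\tau_0f=f$). Let $I_n=[n-1,n)$, $\omega_n=\omega_\alpha(I_n)$, and $\|f\|_{p,\infty}=\sup_{n\ge1}\big(\frac1{\omega_n}\int_{I_n}|f|^pd\omega_\alpha\big)^{1/p}$. *)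

theory Defs
  imports "HOL-Analysis.Analysis"
begin

text \<open>Bessel--Kingman hypergroup on R_+ = [0,\<infinity>), alpha \<ge> 1/2.\<close>

definition C_Gamma :: "real \<Rightarrow> real" where
  "C_Gamma \<alpha> = Gamma (\<alpha> + 1) / (Gamma (1/2) * Gamma (\<alpha> + 1/2) * 2 powr (2*\<alpha> - 1))"

definition K_alpha :: "real \<Rightarrow> real \<Rightarrow> real \<Rightarrow> real \<Rightarrow> real" where
  "K_alpha \<alpha> x y z =
     C_Gamma \<alpha> * ((z\<^sup>2 - (x - y)\<^sup>2) * ((x + y)\<^sup>2 - z\<^sup>2)) powr (\<alpha> - 1/2)
       / (x * y * z) powr (2*\<alpha>)"

definition omega :: "real \<Rightarrow> real measure" where
  "omega \<alpha> = density (lebesgue_on {0..}) (\<lambda>z. ennreal (z powr (2*\<alpha> + 1)))"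

text \<open>Generalized translation \<tau>_y f(x) = (\<epsilon>_x * \<epsilon>_y)(f); \<epsilon>_0 is the identity.\<close>
definition tau :: "real \<Rightarrow> real \<Rightarrow> (real \<Rightarrow> real) \<Rightarrow> real \<Rightarrow> real" where
  "tau \<alpha> y f x =
     (if x = 0 then f y
      else if y = 0 then f x
      else (LINT z:{\<bar>x - y\<bar>..x + y}|lborel. K_alpha \<alpha> x y z * f z * z powr (2*\<alpha> + 1)))"

definition enn_root :: "real \<Rightarrow> ennreal \<Rightarrow> ennreal" where
  "enn_root p t = (if t = \<infinity> then \<infinity> else ennreal (enn2real t powr (1/p)))"

definition I_n :: "nat \<Rightarrow> real set" where
  "I_n n = {real n - 1..<real n}"

definition omega_n :: "real \<Rightarrow> nat \<Rightarrow> real" where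
  "omega_n \<alpha> n = measure (omega \<alpha>) (I_n n)"

definition amalgam_norm :: "real \<Rightarrow> real \<Rightarrow> (real \<Rightarrow> real) \<Rightarrow> ennreal" where
  "amalgam_norm \<alpha> p f =
     (SUP n\<in>{1..}. enn_root p
        ((\<integral>\<^sup>+ x\<in>I_n n. ennreal (\<bar>f x\<bar> powr p) \<partial>omega \<alpha>) / ennreal (omega_n \<alpha> n)))"

end

theory Submission
  imports Defs
begin

text \<open>The translate \<tau>_y 1_[0,1] vanishes unless |x - y| \<le> 1 and is bounded by a constant
multiple of (1 + y)^-(2\<alpha>+1): for small y the kernel weight is O(z/(xy)) on an interval of
length 2 min(x, y), and for y \<ge> 2 only z \<le> 1 contributes, where the kernel weight is
O(y^-(2\<alpha>+1)). The support meets at most three cells I_n, each of \<omega>_\<alpha>-measure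
O((1 + y)^(2\<alpha>+1)), and on each of them the integral of |f|^p is at most \<omega>_n \<parallel>f\<parallel>_{p,\<infinity>}^p,
so the decay of the translate exactly compensates the growth of the Haar measure.\<close>

lemma powr_borel_measurable_lebesgue_on: "(\<lambda>z::real. z powr c) \<in> borel_measurable (lebesgue_on S)"
  by (intro measurable_restrict_space1 measurable_completion) measurable

lemma sets_omega: "sets (omega \<alpha>) = sets (lebesgue_on {0..})"
  by (simp add: omega_def)

lemma space_omega: "space (omega \<alpha>) = {0..}"
  by (simp add: omega_def)

lemma measurable_omega_iff: "measurable (omega \<alpha>) N = measurable (lebesgue_on {0..}) N"
  by (rule measurable_cong_sets) (simp_all add: sets_omega)

lemma I_n_in_sets: "1 \<le> n \<Longrightarrow> I_n n \<in> sets (lebesgue_on {0..})"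
  by (subst sets_restrict_space_iff) (auto simp: I_n_def)

lemma omega_n_le:
  assumes "1 \<le> n" "0 \<le> 2*\<alpha> + 1"
  shows "omega_n \<alpha> n \<le> real n powr (2*\<alpha> + 1)"
proof -
  have "emeasure (omega \<alpha>) (I_n n) = (\<integral>\<^sup>+ z. ennreal (z powr (2*\<alpha> + 1)) * indicator (I_n n) z \<partial>lebesgue_on {0..})"
    unfolding omega_def
    by (rule emeasure_density) (auto intro: I_n_in_sets assms powr_borel_measurable_lebesgue_on)
  also have "\<dots> \<le> (\<integral>\<^sup>+ z. ennreal (real n powr (2*\<alpha> + 1)) * indicator (I_n n) z \<partial>lebesgue_on {0..})"
    using assms by (intro nn_integral_mono) (auto simp: I_n_def indicator_def intro!: powr_mono2)
  also have "\<dots> = ennreal (real n powr (2*\<alpha> + 1)) * emeasure (lebesgue_on {0..}) (I_n n)"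
    by (rule nn_integral_cmult_indicator) (rule I_n_in_sets[OF assms(1)])
  also have "emeasure (lebesgue_on {0..}) (I_n n) = 1"
    using assms(1) by (subst emeasure_restrict_space) (auto simp: I_n_def)
  finally show ?thesis
    unfolding omega_n_def measure_def by (simp add: enn2real_leI)
qed

lemma C_Gamma_nonneg: "-1/2 < \<alpha> \<Longrightarrow> 0 \<le> C_Gamma \<alpha>"
  unfolding C_Gamma_def by (intro divide_nonneg_pos mult_pos_pos) auto

lemma power2_powr: "0 \<le> t \<Longrightarrow> (t\<^sup>2) powr a = t powr (2*a)"
  for t :: real
  by (cases "t = 0") (simp_all add: powr_powr flip: powr_numeral)

lemma kernel_product_le: "(z\<^sup>2 - (x - y)\<^sup>2) * ((x + y)\<^sup>2 - z\<^sup>2) \<le> (2*x*y)\<^sup>2"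
  for x y z :: real
proof -
  have "(2*x*y)\<^sup>2 - (z\<^sup>2 - (x - y)\<^sup>2) * ((x + y)\<^sup>2 - z\<^sup>2) = (z\<^sup>2 - (x\<^sup>2 + y\<^sup>2))\<^sup>2"
    by (simp add: power2_eq_square algebra_simps)
  then show ?thesis
    by (metis diff_ge_0_iff_ge zero_le_power2)
qed

lemma kernel_product_bounds:
  fixes x y z :: real
  assumes "\<bar>x - y\<bar> \<le> z" "z \<le> x + y"
  shows "0 \<le> (z\<^sup>2 - (x - y)\<^sup>2) * ((x + y)\<^sup>2 - z\<^sup>2)"
    and "(z\<^sup>2 - (x - y)\<^sup>2) * ((x + y)\<^sup>2 - z\<^sup>2) \<le> (z * (x + y))\<^sup>2"
proof -
  have "(x - y)\<^sup>2 \<le> z\<^sup>2" "z\<^sup>2 \<le> (x + y)\<^sup>2"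
    using assms by (metis abs_ge_zero power2_abs power_mono order_trans)+
  then show "0 \<le> (z\<^sup>2 - (x - y)\<^sup>2) * ((x + y)\<^sup>2 - z\<^sup>2)"
    and "(z\<^sup>2 - (x - y)\<^sup>2) * ((x + y)\<^sup>2 - z\<^sup>2) \<le> (z * (x + y))\<^sup>2"
    by (auto simp: power_mult_distrib intro: mult_mono)
qed

lemma K_alpha_weight_eq:
  assumes "0 < x" "0 < y" "0 < z"
  shows "K_alpha \<alpha> x y z * z powr (2*\<alpha> + 1) =
     C_Gamma \<alpha> * ((z\<^sup>2 - (x - y)\<^sup>2) * ((x + y)\<^sup>2 - z\<^sup>2)) powr (\<alpha> - 1/2) * z / (x*y) powr (2*\<alpha>)"
proof -
  have "(x*y*z) powr (2*\<alpha>) = (x*y) powr (2*\<alpha>) * z powr (2*\<alpha>)"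
    and "z powr (2*\<alpha> + 1) = z powr (2*\<alpha>) * z"
    using assms by (simp_all add: powr_mult powr_add)
  moreover have "0 < z powr (2*\<alpha>)" "0 < (x*y) powr (2*\<alpha>)"
    using assms by auto
  ultimately show ?thesis
    unfolding K_alpha_def by (simp add: field_simps)
qed

lemma K_alpha_weight_nonneg: "-1/2 < \<alpha> \<Longrightarrow> 0 \<le> K_alpha \<alpha> x y z * z powr (2*\<alpha> + 1)"
  unfolding K_alpha_def using C_Gamma_nonneg by simp

lemma K_alpha_weight_le:
  assumes \<alpha>: "1/2 \<le> \<alpha>" and "0 < x" "0 < y" "\<bar>x - y\<bar> \<le> z" "z \<le> x + y"
  shows "K_alpha \<alpha> x y z * z powr (2*\<alpha> + 1) \<le> C_Gamma \<alpha> * 2 powr (2*\<alpha> - 1) * z / (x*y)"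
proof (cases "z = 0")
  case False
  then have z: "0 < z" using assms by linarith
  let ?P = "(z\<^sup>2 - (x - y)\<^sup>2) * ((x + y)\<^sup>2 - z\<^sup>2)"
  have "?P powr (\<alpha> - 1/2) \<le> ((2*x*y)\<^sup>2) powr (\<alpha> - 1/2)"
    using \<alpha> kernel_product_bounds(1)[OF assms(4,5)] kernel_product_le by (intro powr_mono2) auto
  also have "\<dots> = (2*(x*y)) powr (2*\<alpha> - 1)"
    using assms by (subst power2_powr) (auto simp: algebra_simps)
  also have "\<dots> = 2 powr (2*\<alpha> - 1) * (x*y) powr (2*\<alpha> - 1)"
    using assms by (simp add: powr_mult)
  also have "\<dots> = 2 powr (2*\<alpha> - 1) * (x*y) powr (2*\<alpha>) / (x*y)"
    using assms by (simp add: powr_diff)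
  finally have "C_Gamma \<alpha> * ?P powr (\<alpha> - 1/2) * z / (x*y) powr (2*\<alpha>)
      \<le> C_Gamma \<alpha> * (2 powr (2*\<alpha> - 1) * (x*y) powr (2*\<alpha>) / (x*y)) * z / (x*y) powr (2*\<alpha>)"
    using \<alpha> z by (intro divide_right_mono mult_right_mono mult_left_mono C_Gamma_nonneg) auto
  with assms z show ?thesis
    by (simp add: K_alpha_weight_eq)
qed simp

lemma K_alpha_weight_le_powr:
  assumes \<alpha>: "1/2 \<le> \<alpha>" and "0 < x" "0 < y" "\<bar>x - y\<bar> \<le> z" "z \<le> x + y"
  shows "K_alpha \<alpha> x y z * z powr (2*\<alpha> + 1)
           \<le> C_Gamma \<alpha> * z powr (2*\<alpha>) * (x + y) powr (2*\<alpha> - 1) / (x*y) powr (2*\<alpha>)"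
proof (cases "z = 0")
  case False
  then have z: "0 < z" using assms by linarith
  let ?P = "(z\<^sup>2 - (x - y)\<^sup>2) * ((x + y)\<^sup>2 - z\<^sup>2)"
  have "?P powr (\<alpha> - 1/2) \<le> ((z * (x + y))\<^sup>2) powr (\<alpha> - 1/2)"
    using \<alpha> kernel_product_bounds[OF assms(4,5)] by (intro powr_mono2) auto
  also have "\<dots> = (z * (x + y)) powr (2*\<alpha> - 1)"
    using assms z by (subst power2_powr) (auto simp: algebra_simps)
  also have "\<dots> = z powr (2*\<alpha> - 1) * (x + y) powr (2*\<alpha> - 1)"
    using assms z by (simp add: powr_mult)
  finally have "C_Gamma \<alpha> * ?P powr (\<alpha> - 1/2) * z / (x*y) powr (2*\<alpha>)
      \<le> C_Gamma \<alpha> * (z powr (2*\<alpha> - 1) * (x + y) powr (2*\<alpha> - 1)) * z / (x*y) powr (2*\<alpha>)"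
    using \<alpha> z by (intro divide_right_mono mult_right_mono mult_left_mono C_Gamma_nonneg) auto
  also have "\<dots> = C_Gamma \<alpha> * z powr (2*\<alpha>) * (x + y) powr (2*\<alpha> - 1) / (x*y) powr (2*\<alpha>)"
    using z by (simp add: powr_diff)
  finally show ?thesis
    using assms z by (simp add: K_alpha_weight_eq)
qed simp

lemma K_alpha_weight_le_far:
  assumes \<alpha>: "1/2 \<le> \<alpha>" and x: "0 < x" and y: "2 \<le> y" and z: "\<bar>x - y\<bar> \<le> z" "z \<le> 1"
  shows "K_alpha \<alpha> x y z * z powr (2*\<alpha> + 1)
           \<le> C_Gamma \<alpha> * 3 powr (2*\<alpha> - 1) * 2 powr (2*\<alpha>) / y powr (2*\<alpha> + 1)"
proof -
  have y0: "0 < y" using y by simp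
  have "z powr (2*\<alpha>) \<le> 1"
    using \<alpha> z by (intro powr_le1) auto
  moreover have "(x + y) powr (2*\<alpha> - 1) \<le> (3*y) powr (2*\<alpha> - 1)"
    using \<alpha> x y z by (intro powr_mono2) auto
  moreover have "(y\<^sup>2/2) powr (2*\<alpha>) \<le> (x*y) powr (2*\<alpha>)"
  proof (intro powr_mono2)
    have "y/2 \<le> x"
      using y z by linarith
    then show "y\<^sup>2/2 \<le> x*y"
      using y0 by (auto simp: power2_eq_square dest: mult_right_mono[of _ _ y])
  qed (use \<alpha> y0 in auto)
  ultimately have "C_Gamma \<alpha> * z powr (2*\<alpha>) * (x + y) powr (2*\<alpha> - 1) / (x*y) powr (2*\<alpha>)
      \<le> C_Gamma \<alpha> * 1 * (3*y) powr (2*\<alpha> - 1) / (y\<^sup>2/2) powr (2*\<alpha>)"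
    using \<alpha> y0 C_Gamma_nonneg[of \<alpha>] by (intro frac_le mult_mono) auto
  also have "\<dots> = C_Gamma \<alpha> * 3 powr (2*\<alpha> - 1) * 2 powr (2*\<alpha>) / y powr (2*\<alpha> + 1)"
  proof -
    have "(y\<^sup>2/2) powr (2*\<alpha>) = y powr (2*\<alpha> - 1) * y powr (2*\<alpha> + 1) / 2 powr (2*\<alpha>)"
      using y0 by (simp add: powr_divide power2_powr flip: powr_add)
    moreover have "(3*y) powr (2*\<alpha> - 1) = 3 powr (2*\<alpha> - 1) * y powr (2*\<alpha> - 1)"
      using y0 by (simp add: powr_mult)
    ultimately show ?thesis
      using y0 by (simp add: field_simps)
  qed
  finally show ?thesis
    using K_alpha_weight_le_powr[OF \<alpha> x y0 z(1)] z x y by simp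
qed

lemma set_integral_le_interval_bound:
  fixes h :: "real \<Rightarrow> real"
  assumes "0 \<le> c" "l \<le> u" "\<And>z. indicator S z * h z \<le> c * indicator {l..u} z"
  shows "(LINT z:S|lborel. h z) \<le> c * (u - l)"
  unfolding set_lebesgue_integral_def
proof (rule integral_real_bounded)
  have "(\<integral>\<^sup>+ z. ennreal (indicator S z *\<^sub>R h z) \<partial>lborel) \<le> (\<integral>\<^sup>+ z. ennreal c * indicator {l..u} z \<partial>lborel)"
  proof (rule nn_integral_mono)
    fix z
    have "ennreal (indicator S z *\<^sub>R h z) \<le> ennreal (c * indicator {l..u} z)"
      using assms(3)[of z] by (intro ennreal_leI) simp
    then show "ennreal (indicator S z *\<^sub>R h z) \<le> ennreal c * indicator {l..u} z"
      using assms(1) by (simp add: ennreal_mult' ennreal_indicator)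
  qed
  also have "\<dots> = ennreal (c * (u - l))"
    using assms by (simp add: nn_integral_cmult_indicator ennreal_mult)
  finally show "(\<integral>\<^sup>+ z. ennreal (indicator S z *\<^sub>R h z) \<partial>lborel) \<le> ennreal (c * (u - l))" .
qed (use assms in simp)

lemma tau_indicator_eq_0:
  assumes "0 \<le> x" "0 \<le> y" "1 < \<bar>x - y\<bar>"
  shows "tau \<alpha> y (indicator {0..1}) x = 0"
proof -
  have "(LINT z:{\<bar>x - y\<bar>..x + y}|lborel. K_alpha \<alpha> x y z * indicator {0..1} z * z powr (2*\<alpha> + 1)) = 0"
    using assms by (subst set_lebesgue_integral_cong[where g = "\<lambda>_. 0"]) auto
  with assms show ?thesis
    unfolding tau_def by auto
qed

text \<open>The 1 covers x = 0 and y = 0, where \<tau> is plain evaluation of the indicator.\<close>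

lemma tau_indicator_le:
  assumes \<alpha>: "1/2 \<le> \<alpha>" and "0 \<le> x" "0 \<le> y"
  shows "tau \<alpha> y (indicator {0..1}) x \<le> max 1 (4 * C_Gamma \<alpha> * 2 powr (2*\<alpha> - 1))"
proof (cases "x = 0 \<or> y = 0")
  case False
  then have x: "0 < x" and y: "0 < y" using assms by auto
  define c where "c = C_Gamma \<alpha> * 2 powr (2*\<alpha> - 1)"
  have c: "0 \<le> c" using C_Gamma_nonneg[of \<alpha>] \<alpha> by (simp add: c_def)
  have "(LINT z:{\<bar>x - y\<bar>..x + y}|lborel. K_alpha \<alpha> x y z * indicator {0..1} z * z powr (2*\<alpha> + 1))
        \<le> (c * (x + y) / (x*y)) * ((x + y) - \<bar>x - y\<bar>)"
  proof (rule set_integral_le_interval_bound)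
    fix z
    have "K_alpha \<alpha> x y z * indicator {0..1} z * z powr (2*\<alpha> + 1) \<le> c * (x + y) / (x*y)"
      if "\<bar>x - y\<bar> \<le> z" "z \<le> x + y"
    proof -
      have "K_alpha \<alpha> x y z * indicator {0..1} z * z powr (2*\<alpha> + 1) \<le> K_alpha \<alpha> x y z * z powr (2*\<alpha> + 1)"
        using K_alpha_weight_nonneg[of \<alpha> x y z] \<alpha> by (auto simp: indicator_def)
      also have "\<dots> \<le> c * z / (x*y)"
        unfolding c_def using K_alpha_weight_le[OF \<alpha> x y that] .
      also have "\<dots> \<le> c * (x + y) / (x*y)"
        using that c x y by (intro divide_right_mono mult_left_mono) auto
      finally show ?thesis .
    qed
    then show "indicator {\<bar>x - y\<bar>..x + y} z * (K_alpha \<alpha> x y z * indicator {0..1} z * z powr (2*\<alpha> + 1))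
          \<le> c * (x + y) / (x*y) * indicator {\<bar>x - y\<bar>..x + y} z"
      by (simp add: indicator_def)
  qed (use c x y in auto)
  also have "\<dots> \<le> c * 4"
  proof -
    have "(x + y) * ((x + y) - \<bar>x - y\<bar>) = 2 * min x y * (x + y)"
      by (simp add: abs_if min_def algebra_simps)
    also have "\<dots> \<le> 2 * min x y * (2 * max x y)"
      using x y by (intro mult_left_mono) auto
    also have "\<dots> = 4 * (x*y)"
      by (simp add: min_def max_def)
    finally have "(x + y) * ((x + y) - \<bar>x - y\<bar>) / (x*y) \<le> 4"
      using x y by (simp add: divide_le_eq)
    then show ?thesis
      using c mult_left_mono by fastforce
  qed
  finally show ?thesis
    unfolding tau_def c_def using x y by simp
qed (auto simp: tau_def indicator_def)

lemma tau_indicator_le_far: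
  assumes \<alpha>: "1/2 \<le> \<alpha>" and "0 \<le> x" "2 \<le> y"
  shows "tau \<alpha> y (indicator {0..1}) x \<le> C_Gamma \<alpha> * 3 powr (2*\<alpha> - 1) * 2 powr (2*\<alpha>) / y powr (2*\<alpha> + 1)"
    (is "_ \<le> ?D")
proof (cases "x = 0")
  case False
  then have x: "0 < x" and y: "0 < y" using assms by auto
  have D: "0 \<le> ?D" using C_Gamma_nonneg[of \<alpha>] \<alpha> by simp
  have "(LINT z:{\<bar>x - y\<bar>..x + y}|lborel. K_alpha \<alpha> x y z * indicator {0..1} z * z powr (2*\<alpha> + 1))
        \<le> ?D * (1 - 0)"
  proof (rule set_integral_le_interval_bound)
    fix z
    show "indicator {\<bar>x - y\<bar>..x + y} z * (K_alpha \<alpha> x y z * indicator {0..1} z * z powr (2*\<alpha> + 1))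
          \<le> ?D * indicator {0..1} z"
      using K_alpha_weight_le_far[OF \<alpha> x assms(3), of z] D by (auto simp: indicator_def)
  qed (use D in auto)
  then show ?thesis
    unfolding tau_def using x y by simp
qed (use assms C_Gamma_nonneg[of \<alpha>] in \<open>auto simp: tau_def indicator_def\<close>)

lemma tau_indicator_decay:
  assumes \<alpha>: "1/2 \<le> \<alpha>"
  obtains c where "0 \<le> c"
    and "\<And>x y. 0 \<le> x \<Longrightarrow> 0 \<le> y \<Longrightarrow> tau \<alpha> y (indicator {0..1}) x \<le> c / (1 + y) powr (2*\<alpha> + 1)"
proof -
  define s where "s = 2*\<alpha> + 1"
  define B where "B = max 1 (4 * C_Gamma \<alpha> * 2 powr (2*\<alpha> - 1))"
  define D where "D = C_Gamma \<alpha> * 3 powr (2*\<alpha> - 1) * 2 powr (2*\<alpha>)"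
  define c where "c = max (B * 3 powr s) (D * 2 powr s)"
  have s: "0 < s" and D: "0 \<le> D"
    using \<alpha> C_Gamma_nonneg[of \<alpha>] by (simp_all add: s_def D_def)
  have c: "0 \<le> c"
    unfolding c_def B_def by (intro max.coboundedI1 mult_nonneg_nonneg) auto
  show ?thesis
  proof (rule that[OF c])
    fix x y :: real
    assume x: "0 \<le> x" and y: "0 \<le> y"
    have "tau \<alpha> y (indicator {0..1}) x \<le> c / (1 + y) powr s"
    proof (cases "y \<le> 2")
      case True
      have "tau \<alpha> y (indicator {0..1}) x \<le> B * 3 powr s / 3 powr s"
        using tau_indicator_le[OF \<alpha> x y] by (simp add: B_def)
      also have "\<dots> \<le> c / (1 + y) powr s"
        using True y s c by (intro frac_le powr_mono2) (auto simp: c_def)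
      finally show ?thesis .
    next
      case False
      have "tau \<alpha> y (indicator {0..1}) x \<le> D * 2 powr s / (2*y) powr s"
        using tau_indicator_le_far[OF \<alpha> x] False by (simp add: D_def s_def powr_mult)
      also have "\<dots> \<le> c / (1 + y) powr s"
        using False s c by (intro frac_le powr_mono2) (auto simp: c_def)
      finally show ?thesis .
    qed
    then show "tau \<alpha> y (indicator {0..1}) x \<le> c / (1 + y) powr (2*\<alpha> + 1)"
      by (simp only: s_def)
  qed
qed

text \<open>The indices n for which the cell I_n = [n - 1, n) can meet [y - 1, y + 1].\<close>

definition cells_near :: "real \<Rightarrow> nat set" where
  "cells_near y = {max 1 (nat \<lfloor>y\<rfloor>) .. nat \<lfloor>y\<rfloor> + 2}"

lemma card_cells_near: "card (cells_near y) \<le> 3"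
  by (simp add: cells_near_def)

lemma cells_near_bounds:
  assumes "0 \<le> y" "n \<in> cells_near y"
  shows "1 \<le> n" "real n \<le> y + 2"
  using assms by (auto simp: cells_near_def) linarith

lemma sum_indicator_cells_near_ge_1:
  assumes "0 \<le> x" "0 \<le> y" "\<bar>x - y\<bar> \<le> 1"
  shows "1 \<le> (\<Sum>n\<in>cells_near y. indicator (I_n n) x :: real)"
proof -
  have "\<lfloor>x\<rfloor> \<le> \<lfloor>y\<rfloor> + 1" "\<lfloor>y\<rfloor> \<le> \<lfloor>x\<rfloor> + 1"
    using assms floor_mono[of x "y + 1"] floor_mono[of y "x + 1"] by auto
  then have "nat \<lfloor>x\<rfloor> + 1 \<in> cells_near y"
    using assms by (auto simp: cells_near_def)
  moreover have "x \<in> I_n (nat \<lfloor>x\<rfloor> + 1)"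
    using assms(1) by (auto simp: I_n_def) linarith+
  ultimately show ?thesis
    using member_le_sum[of "nat \<lfloor>x\<rfloor> + 1" "cells_near y" "\<lambda>n. indicator (I_n n) x :: real"]
    by (simp add: cells_near_def)
qed

lemma omega_n_cells_near_le:
  assumes "0 \<le> 2*\<alpha> + 1" "0 \<le> y" "n \<in> cells_near y"
  shows "omega_n \<alpha> n \<le> 2 powr (2*\<alpha> + 1) * (1 + y) powr (2*\<alpha> + 1)"
proof -
  have "omega_n \<alpha> n \<le> real n powr (2*\<alpha> + 1)"
    using assms cells_near_bounds by (intro omega_n_le) auto
  also have "\<dots> \<le> (2 * (1 + y)) powr (2*\<alpha> + 1)"
    using assms cells_near_bounds[OF assms(2,3)] by (intro powr_mono2) auto
  also have "\<dots> = 2 powr (2*\<alpha> + 1) * (1 + y) powr (2*\<alpha> + 1)"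
    by (rule powr_mult)
  finally show ?thesis .
qed

lemma tau_indicator_le_cells:
  assumes \<alpha>: "1/2 \<le> \<alpha>"
  obtains c where "0 \<le> c"
    and "\<And>x y. 0 \<le> x \<Longrightarrow> 0 \<le> y \<Longrightarrow> tau \<alpha> y (indicator {0..1}) x
           \<le> c / (1 + y) powr (2*\<alpha> + 1) * (\<Sum>n\<in>cells_near y. indicator (I_n n) x)"
proof -
  obtain c where c: "0 \<le> c"
    and decay: "\<And>x y. 0 \<le> x \<Longrightarrow> 0 \<le> y \<Longrightarrow> tau \<alpha> y (indicator {0..1}) x \<le> c / (1 + y) powr (2*\<alpha> + 1)"
    using tau_indicator_decay[OF \<alpha>] by blast
  show ?thesis
  proof (rule that[OF c])
    fix x y :: real
    assume x: "0 \<le> x" and y: "0 \<le> y"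
    have w: "0 \<le> c / (1 + y) powr (2*\<alpha> + 1)"
      using c by simp
    show "tau \<alpha> y (indicator {0..1}) x
           \<le> c / (1 + y) powr (2*\<alpha> + 1) * (\<Sum>n\<in>cells_near y. indicator (I_n n) x)"
    proof (cases "\<bar>x - y\<bar> \<le> 1")
      case True
      have "c / (1 + y) powr (2*\<alpha> + 1) * 1
          \<le> c / (1 + y) powr (2*\<alpha> + 1) * (\<Sum>n\<in>cells_near y. indicator (I_n n) x)"
        using sum_indicator_cells_near_ge_1[OF x y True] w by (rule mult_left_mono)
      then show ?thesis
        using decay[OF x y] by simp
    next
      case False
      then show ?thesis
        using tau_indicator_eq_0[OF x y] w by (simp add: sum_nonneg c)
    qed
  qed
qed

lemma set_nn_integral_I_n_le_amalgam_norm: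
  assumes p: "0 < p" and a: "amalgam_norm \<alpha> p f = ennreal a" "0 \<le> a" and n: "1 \<le> n"
  shows "(\<integral>\<^sup>+ x\<in>I_n n. ennreal (\<bar>f x\<bar> powr p) \<partial>omega \<alpha>) \<le> ennreal (omega_n \<alpha> n * a powr p)"
proof -
  define J where "J = (\<integral>\<^sup>+ x\<in>I_n n. ennreal (\<bar>f x\<bar> powr p) \<partial>omega \<alpha>)"
  define r where "r = J / ennreal (omega_n \<alpha> n)"
  have "enn_root p r \<le> ennreal a"
    unfolding a(1)[symmetric] amalgam_norm_def r_def J_def using n by (intro SUP_upper) auto
  then obtain t where t: "r = ennreal t" "0 \<le> t" "t powr (1/p) \<le> a"
    unfolding enn_root_def using a(2)
    by (cases r) (auto simp: top_unique split: if_splits)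
  have "t \<le> a powr p"
    using t p powr_mono2[OF _ _ t(3), of p] by (simp add: powr_powr)
  show ?thesis
  proof (cases "omega_n \<alpha> n = 0")
    case True
    \<comment> \<open>in ennreal, J / 0 = \<infinity> unless J = 0\<close>
    then have "J = 0"
      using t(1) by (auto simp: r_def split: if_splits)
    then show ?thesis
      unfolding J_def by simp
  next
    case False
    have "J = r * ennreal (omega_n \<alpha> n)"
      unfolding r_def using False by (simp add: omega_n_def ennreal_divide_times)
    also have "\<dots> \<le> ennreal (a powr p) * ennreal (omega_n \<alpha> n)"
      using t(1) \<open>t \<le> a powr p\<close> by (intro mult_right_mono) auto
    also have "\<dots> = ennreal (omega_n \<alpha> n * a powr p)"
      by (simp add: omega_n_def ennreal_mult' mult.commute)
    finally show ?thesis
      unfolding J_def .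
  qed
qed

lemma enn_root_le_ennreal:
  assumes "0 < p" "t \<le> ennreal r" "0 \<le> r"
  shows "enn_root p t \<le> ennreal (r powr (1/p))"
proof -
  have "t \<noteq> \<infinity>" and "enn2real t \<le> r"
    using assms by (auto simp: top_unique enn2real_leI)
  then show ?thesis
    unfolding enn_root_def using assms(1) by (auto intro!: ennreal_leI powr_mono2)
qed

lemma nn_integral_le_sum_cells:
  assumes h[measurable]: "h \<in> borel_measurable (lebesgue_on {0..})" and h_nonneg: "\<And>x. 0 \<le> h x"
    and N: "finite N" "\<And>n. n \<in> N \<Longrightarrow> 1 \<le> n" and w: "0 \<le> w"
    and g_le: "\<And>x. 0 \<le> x \<Longrightarrow> g x \<le> w * (\<Sum>n\<in>N. indicator (I_n n) x)"
  shows "(\<integral>\<^sup>+ x. ennreal (h x * g x) \<partial>omega \<alpha>) \<le> ennreal w * (\<Sum>n\<in>N. \<integral>\<^sup>+ x\<in>I_n n. ennreal (h x) \<partial>omega \<alpha>)"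
proof -
  have cell_meas: "(\<lambda>x. ennreal (h x) * indicator (I_n n) x) \<in> borel_measurable (omega \<alpha>)"
    if "n \<in> N" for n
  proof -
    have [measurable]: "I_n n \<in> sets (lebesgue_on {0..})"
      using N(2)[OF that] by (rule I_n_in_sets)
    show ?thesis
      unfolding measurable_omega_iff by measurable
  qed
  have "(\<integral>\<^sup>+ x. ennreal (h x * g x) \<partial>omega \<alpha>)
      \<le> (\<integral>\<^sup>+ x. ennreal w * (\<Sum>n\<in>N. ennreal (h x) * indicator (I_n n) x) \<partial>omega \<alpha>)"
  proof (rule nn_integral_mono)
    fix x
    assume "x \<in> space (omega \<alpha>)"
    then have "h x * g x \<le> h x * (w * (\<Sum>n\<in>N. indicator (I_n n) x))"
      using g_le h_nonneg by (intro mult_left_mono) (auto simp: space_omega)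
    also have "\<dots> = w * (\<Sum>n\<in>N. h x * indicator (I_n n) x)"
      by (simp add: sum_distrib_left algebra_simps)
    finally have "ennreal (h x * g x) \<le> ennreal (w * (\<Sum>n\<in>N. h x * indicator (I_n n) x))"
      by (rule ennreal_leI)
    also have "\<dots> = ennreal w * (\<Sum>n\<in>N. ennreal (h x * indicator (I_n n) x))"
      using h_nonneg by (subst sum_ennreal) (auto intro: ennreal_mult'[OF w])
    also have "\<dots> = ennreal w * (\<Sum>n\<in>N. ennreal (h x) * indicator (I_n n) x)"
      by (intro arg_cong[where f = "(*) (ennreal w)"] sum.cong) (auto simp: indicator_def)
    finally show "ennreal (h x * g x) \<le> ennreal w * (\<Sum>n\<in>N. ennreal (h x) * indicator (I_n n) x)" .
  qed
  also have "\<dots> = ennreal w * (\<Sum>n\<in>N. \<integral>\<^sup>+ x\<in>I_n n. ennreal (h x) \<partial>omega \<alpha>)"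
    using cell_meas by (simp only: nn_integral_cmult[OF borel_measurable_sum] nn_integral_sum)
  finally show ?thesis .
qed

lemma nn_integral_tau_indicator_le:
  assumes \<alpha>: "1/2 \<le> \<alpha>" and p: "0 < p"
  obtains K where "0 \<le> K"
    and "\<And>f y a. f \<in> borel_measurable (lebesgue_on {0..}) \<Longrightarrow> amalgam_norm \<alpha> p f = ennreal a \<Longrightarrow>
           0 \<le> a \<Longrightarrow> 0 \<le> y \<Longrightarrow>
           (\<integral>\<^sup>+ x. ennreal (\<bar>f x\<bar> powr p * tau \<alpha> y (indicator {0..1}) x) \<partial>omega \<alpha>) \<le> ennreal (K * a powr p)"
proof -
  define s where "s = 2*\<alpha> + 1"
  obtain c where c: "0 \<le> c"
    and tau_le: "\<And>x y. 0 \<le> x \<Longrightarrow> 0 \<le> y \<Longrightarrow> tau \<alpha> y (indicator {0..1}) x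
                   \<le> c / (1 + y) powr s * (\<Sum>n\<in>cells_near y. indicator (I_n n) x)"
    using tau_indicator_le_cells[OF \<alpha>] unfolding s_def by blast
  show ?thesis
  proof (rule that)
    show "0 \<le> 3 * c * 2 powr s"
      using c by simp
    fix f :: "real \<Rightarrow> real" and y a :: real
    assume f[measurable]: "f \<in> borel_measurable (lebesgue_on {0..})"
      and a: "amalgam_norm \<alpha> p f = ennreal a" "0 \<le> a" and y: "0 \<le> y"
    define w where "w = c / (1 + y) powr s"
    have w: "0 \<le> w"
      using c by (simp add: w_def)
    have "(\<integral>\<^sup>+ x. ennreal (\<bar>f x\<bar> powr p * tau \<alpha> y (indicator {0..1}) x) \<partial>omega \<alpha>)
        \<le> ennreal w * (\<Sum>n\<in>cells_near y. \<integral>\<^sup>+ x\<in>I_n n. ennreal (\<bar>f x\<bar> powr p) \<partial>omega \<alpha>)"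
      using cells_near_bounds[OF y] tau_le[OF _ y] w
      by (intro nn_integral_le_sum_cells) (auto simp: cells_near_def w_def)
    also have "\<dots> \<le> ennreal w * (\<Sum>n\<in>cells_near y. ennreal (2 powr s * (1 + y) powr s * a powr p))"
    proof (intro mult_left_mono sum_mono order_trans[OF set_nn_integral_I_n_le_amalgam_norm[OF p a]])
      fix n
      assume "n \<in> cells_near y"
      then show "1 \<le> n" and "ennreal (omega_n \<alpha> n * a powr p) \<le> ennreal (2 powr s * (1 + y) powr s * a powr p)"
        using omega_n_cells_near_le[of \<alpha> y n] cells_near_bounds[of y n] \<alpha> y
        by (auto simp: s_def intro!: ennreal_leI mult_right_mono)
    qed simp
    also have "\<dots> = ennreal (card (cells_near y) * (c * 2 powr s * a powr p))"
      using w y by (simp add: w_def ennreal_of_nat_eq_real_of_nat mult_ac flip: ennreal_mult)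
    also have "\<dots> \<le> ennreal (3 * c * 2 powr s * a powr p)"
      using card_cells_near[of y] c by (intro ennreal_leI) (simp add: mult.assoc mult_right_mono)
    finally show "(\<integral>\<^sup>+ x. ennreal (\<bar>f x\<bar> powr p * tau \<alpha> y (indicator {0..1}) x) \<partial>omega \<alpha>)
        \<le> ennreal (3 * c * 2 powr s * a powr p)" .
  qed
qed

lemma powr_inverse_le_max: "0 \<le> t \<Longrightarrow> 1 \<le> p \<Longrightarrow> t powr (1/p) \<le> max 1 t"
  for t p :: real
  by (cases "t \<le> 1") (auto intro: powr_le1 order_trans[OF powr_mono[of "1/p" 1 t]])

theorem mainTheorem3:
  fixes \<alpha> p :: real
  assumes "\<alpha> \<ge> 1/2" and "1 \<le> p"
  shows "\<exists>C>0. \<forall>f :: real \<Rightarrow> real. f \<in> borel_measurable (lebesgue_on {0..}) \<longrightarrow>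
           (SUP y\<in>{0..}. enn_root p
              (\<integral>\<^sup>+ x. ennreal (\<bar>f x\<bar> powr p * tau \<alpha> y (indicator {0..1}) x) \<partial>omega \<alpha>))
           \<le> ennreal C * amalgam_norm \<alpha> p f"
proof -
  have p: "0 < p"
    using assms(2) by simp
  obtain K where K: "0 \<le> K" and integral_le:
    "\<And>f y a. f \<in> borel_measurable (lebesgue_on {0..}) \<Longrightarrow> amalgam_norm \<alpha> p f = ennreal a \<Longrightarrow>
       0 \<le> a \<Longrightarrow> 0 \<le> y \<Longrightarrow>
       (\<integral>\<^sup>+ x. ennreal (\<bar>f x\<bar> powr p * tau \<alpha> y (indicator {0..1}) x) \<partial>omega \<alpha>) \<le> ennreal (K * a powr p)"
    using nn_integral_tau_indicator_le[OF assms(1) p] by blast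
  have "(SUP y\<in>{0..}. enn_root p
          (\<integral>\<^sup>+ x. ennreal (\<bar>f x\<bar> powr p * tau \<alpha> y (indicator {0..1}) x) \<partial>omega \<alpha>))
        \<le> ennreal (max 1 K) * amalgam_norm \<alpha> p f"
    if f: "f \<in> borel_measurable (lebesgue_on {0..})" for f :: "real \<Rightarrow> real"
  proof (cases "amalgam_norm \<alpha> p f" rule: ennreal_cases)
    case (real a)
    note a = \<open>0 \<le> a\<close> and norm_eq = \<open>amalgam_norm \<alpha> p f = ennreal a\<close>
    have "(K * a powr p) powr (1/p) = K powr (1/p) * a"
      using K a p by (simp add: powr_mult powr_powr)
    also have "\<dots> \<le> max 1 K * a"
      using powr_inverse_le_max[OF K assms(2)] a by (rule mult_right_mono)
    finally have "enn_root p (\<integral>\<^sup>+ x. ennreal (\<bar>f x\<bar> powr p * tau \<alpha> y (indicator {0..1}) x) \<partial>omega \<alpha>)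
        \<le> ennreal (max 1 K * a)" if "0 \<le> y" for y
      using enn_root_le_ennreal[OF p integral_le[OF f norm_eq a that]] K a by (auto intro: order_trans)
    then show ?thesis
      unfolding norm_eq using a by (auto intro!: SUP_least simp: ennreal_mult)
  qed (simp add: ennreal_mult_top)
  then show ?thesis
    by (intro exI[of _ "max 1 K"]) auto
qed

end
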